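(* For every integer $j\geq 2$ and every integer $m\geq 0$ with $(j,m)\notin\{(2,0),(3,0)\}$, \[ \lim_{t\to -1}(1-t^2)^{\frac{j-3}{2}+m}g_j^{(m)}(t)=0,\qquad \lim_{t\to +1}(1-t^2)^{\frac{j-3}{2}+m}g_j^{(m)}(t)=-(j-1)\,2^{m-2}\,\frac{\Gamma\big(\frac{j-3}{2}+m\big)}{\pi^{\frac{j-1}{2}}}. \]
   Context: $\omega_j$ is the surface area of $\mathbb{S}^{j-1}\subseteq\mathbb{R}^j$. The Berg functions $g_j\in C^\infty(-1,1)$, $j\ge2$, are defined by $g_2(t)=\frac{1}{2\pi}(\pi-\arccos t)(1-t^2)^{1/2}-\frac{1}{4\pi}t$, $g_3(t)=\frac{1}{2\pi}\big(1+t\log(1-t)+(\tfrac43-\log 2)t\big)$, $g_{j+2}(t)=\frac{j+1}{2\pi}g_j(t)+\frac{j+1}{2\pi(j-1)}t\,g_j'(t)+\frac{j+1}{2\pi\omega_j}t$. $g_j^{(m)}$ denotes the $m$-th derivative. *)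

theory Defs
  imports "HOL-Analysis.Analysis"
begin

(* omega j = surface area of the unit sphere S^(j-1) in R^j *)
definition omega :: "nat \<Rightarrow> real" where
  "omega j = 2 * pi powr (real j / 2) / Gamma (real j / 2)"

(* Berg functions g_j, j >= 2 (indices 0,1 are unused dummies).
   g_{j+2} = (j+1)/(2pi) g_j + (j+1)/(2pi(j-1)) t g_j' + (j+1)/(2 pi omega_j) t *)
fun berg :: "nat \<Rightarrow> real \<Rightarrow> real" where
  "berg 0 = (\<lambda>t. 0)"
| "berg (Suc 0) = (\<lambda>t. 0)"
| "berg (Suc (Suc 0)) =
     (\<lambda>t. 1 / (2 * pi) * (pi - arccos t) * sqrt (1 - t\<^sup>2) - t / (4 * pi))"
| "berg (Suc (Suc (Suc 0))) =
     (\<lambda>t. 1 / (2 * pi) * (1 + t * ln (1 - t) + (4 / 3 - ln 2) * t))"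
| "berg (Suc (Suc (Suc (Suc j)))) =
     (\<lambda>t. (real (j + 2) + 1) / (2 * pi) * berg (j + 2) t
        + (real (j + 2) + 1) / (2 * pi * (real (j + 2) - 1)) * t * deriv (berg (j + 2)) t
        + (real (j + 2) + 1) / (2 * pi * omega (j + 2)) * t)"

end

theory Submission
  imports Defs "HOL-Real_Asymp.Real_Asymp"
begin

text \<open>
  Put Z j m t = (1 - t^2) powr ((j - 3) / 2 + m) * g_j^(m)(t) (berg_scaled). Differentiating the
  recursion m times gives g_(j+2)^(m) = (a + b m) g_j^(m) + b t g_j^(m+1) + c t^(m) with
  b = (j + 1) / (2 pi (j - 1)), hence
  Z (j + 2) m = (a + b m) (1 - t^2) Z j m + b t Z j (m + 1) + o(1) as t tends to +1 or -1,
  and the Gamma constant C j m of the theorem (berg_limit) satisfies C (j + 2) m = b C j (m + 1).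
  This reduces everything to j = 2 and j = 3. The derivatives of g_3 are explicit.
  For g_2, the function y t = (pi - arccos t) sqrt (1 - t^2) solves
  (1 - t^2) y' = - t y + (1 - t^2); differentiating m times gives a three-term recursion for
  (1 - t^2) powr (m - 1/2) y^(m), from which its boundary values follow by induction.
\<close>

section \<open>Infinitely differentiable functions\<close>

definition infinitely_differentiable_on :: "real set \<Rightarrow> (real \<Rightarrow> real) \<Rightarrow> bool" where
  "infinitely_differentiable_on S f \<longleftrightarrow>
     (\<forall>m. \<forall>t\<in>S. ((deriv ^^ m) f has_real_derivative (deriv ^^ Suc m) f t) (at t))"

lemma iterated_deriv_eqI:
  assumes S: "open S"
    and F: "\<And>m t. t \<in> S \<Longrightarrow> (F m has_real_derivative F (Suc m) t) (at t)"
    and f: "\<And>t. t \<in> S \<Longrightarrow> f t = F 0 t"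
    and t: "t \<in> S"
  shows "(deriv ^^ m) f t = F m t"
  using t
proof (induction m arbitrary: t)
  case 0
  then show ?case
    by (simp add: f)
next
  case (Suc m)
  have "((deriv ^^ m) f has_real_derivative F (Suc m) t) (at t)"
    using F[OF Suc.prems] S Suc.prems
    by (rule has_field_derivative_transform_within_open) (simp add: Suc.IH)
  then show ?case
    by (simp add: DERIV_imp_deriv)
qed

lemma infinitely_differentiable_onI:
  assumes S: "open S"
    and F: "\<And>m t. t \<in> S \<Longrightarrow> (F m has_real_derivative F (Suc m) t) (at t)"
    and f: "\<And>t. t \<in> S \<Longrightarrow> f t = F 0 t"
  shows "infinitely_differentiable_on S f"
  unfolding infinitely_differentiable_on_def
proof (intro allI ballI)
  fix m t
  assume t: "t \<in> S"
  have "((deriv ^^ m) f has_real_derivative F (Suc m) t) (at t)"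
    using F[OF t] S t
    by (rule has_field_derivative_transform_within_open) (simp add: iterated_deriv_eqI[OF S F f])
  then show "((deriv ^^ m) f has_real_derivative (deriv ^^ Suc m) f t) (at t)"
    by (simp only: iterated_deriv_eqI[OF S F f t])
qed

lemma isCont_iterated_deriv:
  assumes "infinitely_differentiable_on S f" and "t \<in> S"
  shows "isCont ((deriv ^^ m) f) t"
  using assms unfolding infinitely_differentiable_on_def by (blast intro: DERIV_isCont)

lemma infinitely_differentiable_on_ident: "infinitely_differentiable_on UNIV (\<lambda>x. x)"
  by (rule infinitely_differentiable_onI[where F = "\<lambda>m t. if m = 0 then t else if m = 1 then 1 else 0"])
     (auto intro!: derivative_eq_intros)

lemma infinitely_differentiable_on_one_minus_sq: "infinitely_differentiable_on UNIV (\<lambda>x. 1 - x\<^sup>2)"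
proof (rule infinitely_differentiable_onI)
  fix m and t :: real
  show "((\<lambda>t. if m = 0 then 1 - t\<^sup>2 else if m = 1 then - 2 * t else if m = 2 then - 2 else 0)
      has_real_derivative
      (if Suc m = 0 then 1 - t\<^sup>2 else if Suc m = 1 then - 2 * t else if Suc m = 2 then - 2 else 0)) (at t)"
    by (cases "m > 2") (auto intro!: derivative_eq_intros simp: numeral_2_eq_2 less_Suc_eq)
qed simp_all

lemma has_real_derivative_from_product_eq:
  assumes S: "open S" "t \<in> S"
    and eq: "\<And>x. x \<in> S \<Longrightarrow> q x * g x = N x" and nonzero: "\<And>x. x \<in> S \<Longrightarrow> q x \<noteq> 0"
    and q: "(q has_real_derivative q') (at t)" and N: "(N has_real_derivative N') (at t)"
  shows "(g has_real_derivative (N' - q' * g t) / q t) (at t)"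
proof -
  have "((\<lambda>x. N x / q x) has_real_derivative (N' * q t - N t * q') / (q t * q t)) (at t)"
    using N q nonzero[OF S(2)] by (rule DERIV_divide)
  moreover have "(N' * q t - N t * q') / (q t * q t) = (N' - q' * g t) / q t"
    using eq[OF S(2), symmetric] nonzero[OF S(2)] by (simp add: field_simps)
  ultimately have "((\<lambda>x. N x / q x) has_real_derivative (N' - q' * g t) / q t) (at t)"
    by simp
  then show ?thesis
    by (rule has_field_derivative_transform_within_open[OF _ S]) (use eq nonzero in \<open>simp add: field_simps\<close>)
qed

definition berg_step :: "real \<Rightarrow> real \<Rightarrow> real \<Rightarrow> (real \<Rightarrow> real) \<Rightarrow> real \<Rightarrow> real" where
  "berg_step a b c f t = a * f t + b * t * deriv f t + c * t"

lemma
  assumes S: "open S" and f: "infinitely_differentiable_on S f"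
  shows iterated_deriv_berg_step: "t \<in> S \<Longrightarrow> (deriv ^^ m) (berg_step a b c f) t =
      (a + b * real m) * (deriv ^^ m) f t + b * t * (deriv ^^ Suc m) f t + c * (deriv ^^ m) (\<lambda>x. x) t"
    and infinitely_differentiable_on_berg_step: "infinitely_differentiable_on S (berg_step a b c f)"
proof -
  define F where "F m t = (a + b * real m) * (deriv ^^ m) f t + b * t * (deriv ^^ Suc m) f t
      + c * (deriv ^^ m) (\<lambda>x. x) t" for m t
  have F_deriv: "(F m has_real_derivative F (Suc m) t) (at t)" if "t \<in> S" for m t
  proof -
    have f': "((deriv ^^ k) f has_real_derivative (deriv ^^ Suc k) f t) (at t)"
      and id': "((deriv ^^ k) (\<lambda>x. x) has_real_derivative (deriv ^^ Suc k) (\<lambda>x. x) t) (at t)" for k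
      using f infinitely_differentiable_on_ident \<open>t \<in> S\<close>
      unfolding infinitely_differentiable_on_def by blast+
    show ?thesis
      unfolding F_def by (rule derivative_eq_intros f' id' refl)+ (simp add: algebra_simps)
  qed
  have "berg_step a b c f t = F 0 t" for t
    by (simp add: F_def berg_step_def)
  then show "t \<in> S \<Longrightarrow> (deriv ^^ m) (berg_step a b c f) t = F m t"
    and "infinitely_differentiable_on S (berg_step a b c f)"
    by (auto intro: iterated_deriv_eqI infinitely_differentiable_onI S F_deriv)
qed

lemma one_minus_sq_pos: "t \<in> {-1<..<1} \<Longrightarrow> 1 - t\<^sup>2 > (0::real)"
  by (auto simp: abs_square_less_1 abs_less_iff)

lemma powr_real_plus_1: "(a::real) > 0 \<Longrightarrow> a powr (x + 1) = a * a powr x"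
  by (simp add: powr_add)

lemma at_within_Ioo_endpoints:
  shows "at (-1) within {-1<..<1} = at_right (-1 :: real)"
    and "at 1 within {-1<..<1} = at_left (1 :: real)"
proof -
  show "at (-1) within {-1<..<1} = at_right (-1 :: real)"
    by (rule at_within_nhd[where S = "{..<1}"]) auto
  show "at 1 within {-1<..<1} = at_left (1 :: real)"
    by (rule at_within_nhd[where S = "{-1<..}"]) auto
qed

section \<open>Derivatives of the Berg functions\<close>

lemma berg_add_two:
  assumes "j \<ge> 2"
  shows "berg (j + 2) = berg_step ((real j + 1) / (2 * pi)) ((real j + 1) / (2 * pi * (real j - 1)))
           ((real j + 1) / (2 * pi * omega j)) (berg j)"
proof -
  obtain k where "j = k + 2"
    using assms le_Suc_ex by (metis add.commute)
  then show ?thesis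
    by (simp add: numeral_2_eq_2 berg_step_def fun_eq_iff)
qed

lemma has_real_derivative_fact_div_power:
  assumes "t < 1"
  shows "((\<lambda>x. fact k / (1 - x) ^ Suc k) has_real_derivative fact (Suc k) / (1 - t) ^ Suc (Suc k)) (at t)"
proof -
  define u where "u = 1 - t"
  have "u \<noteq> 0"
    using assms by (simp add: u_def)
  have "((\<lambda>x. fact k / (1 - x) ^ Suc k) has_real_derivative
          - (fact k * (real (Suc k) * u ^ k * - 1)) / (u ^ Suc k * u ^ Suc k)) (at t)"
    using assms unfolding u_def by (auto intro!: derivative_eq_intros simp del: power_Suc)
  moreover have "u ^ Suc k * u ^ Suc k = u ^ k * u ^ Suc (Suc k)"
    by (simp only: power_add[symmetric]) simp
  then have "- (fact k * (real (Suc k) * u ^ k * - 1)) / (u ^ Suc k * u ^ Suc k)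
      = fact (Suc k) / u ^ Suc (Suc k)"
    using \<open>u \<noteq> 0\<close> by (simp add: field_simps del: power_Suc)
  ultimately show ?thesis
    by (simp add: u_def)
qed

fun berg3_deriv :: "nat \<Rightarrow> real \<Rightarrow> real" where
  "berg3_deriv 0 t = (1 + t * ln (1 - t) + (4 / 3 - ln 2) * t) / (2 * pi)"
| "berg3_deriv (Suc 0) t = (ln (1 - t) - t / (1 - t) + (4 / 3 - ln 2)) / (2 * pi)"
| "berg3_deriv (Suc (Suc k)) t =
     - (fact k / (1 - t) ^ Suc k + fact (Suc k) / (1 - t) ^ Suc (Suc k)) / (2 * pi)"

lemma has_real_derivative_berg3_deriv:
  assumes "t < 1"
  shows "(berg3_deriv m has_real_derivative berg3_deriv (Suc m) t) (at t)"
proof -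
  consider "m = 0" | "m = 1" | k where "m = Suc (Suc k)"
    by (metis One_nat_def not0_implies_Suc)
  then show ?thesis
  proof cases
    case 3
    have "((\<lambda>x. fact k / (1 - x) ^ Suc k + fact (Suc k) / (1 - x) ^ Suc (Suc k)) has_real_derivative
        fact (Suc k) / (1 - t) ^ Suc (Suc k) + fact (Suc (Suc k)) / (1 - t) ^ Suc (Suc (Suc k))) (at t)"
      by (intro DERIV_add has_real_derivative_fact_div_power assms)
    from DERIV_cdivide[OF DERIV_minus[OF this], of "2 * pi"] show ?thesis
      by (simp add: 3 berg3_deriv.simps(3)[abs_def])
  qed (use assms in \<open>auto simp: berg3_deriv.simps(1,2)[abs_def] field_simps power2_eq_square
        intro!: derivative_eq_intros\<close>)
qed

lemma
  shows iterated_deriv_berg3: "t \<in> {-1<..<1} \<Longrightarrow> (deriv ^^ m) (berg 3) t = berg3_deriv m t"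
    and infinitely_differentiable_on_berg3: "infinitely_differentiable_on {-1<..<1} (berg 3)"
proof -
  have berg3: "berg 3 t = berg3_deriv 0 t" for t
    by (simp add: numeral_3_eq_3)
  have derivs: "(berg3_deriv m has_real_derivative berg3_deriv (Suc m) t) (at t)"
    if "t \<in> {-1<..<1}" for m t
    using that by (simp add: has_real_derivative_berg3_deriv)
  show "t \<in> {-1<..<1} \<Longrightarrow> (deriv ^^ m) (berg 3) t = berg3_deriv m t"
    by (rule iterated_deriv_eqI[where S = "{-1<..<1}", OF _ derivs berg3]) simp_all
  show "infinitely_differentiable_on {-1<..<1} (berg 3)"
    by (rule infinitely_differentiable_onI[OF _ derivs berg3]) simp
qed

definition berg2_main :: "real \<Rightarrow> real" where
  "berg2_main t = (pi - arccos t) * sqrt (1 - t\<^sup>2)"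

lemma berg2_eq: "berg 2 = berg_step (1 / (2 * pi)) 0 (- 1 / (4 * pi)) berg2_main"
  by (simp add: numeral_2_eq_2 berg_step_def berg2_main_def fun_eq_iff)

lemma has_real_derivative_berg2_main:
  assumes "t \<in> {-1<..<1}"
  shows "(berg2_main has_real_derivative 1 - t * (pi - arccos t) / sqrt (1 - t\<^sup>2)) (at t)"
proof -
  have pos: "1 - t\<^sup>2 > 0"
    using one_minus_sq_pos[OF assms] .
  have "(berg2_main has_real_derivative inverse (sqrt (1 - t\<^sup>2)) * sqrt (1 - t\<^sup>2)
          + (pi - arccos t) * (inverse (sqrt (1 - t\<^sup>2)) / 2 * (- (2 * t)))) (at t)"
    unfolding berg2_main_def[abs_def] using assms pos
    by (auto intro!: derivative_eq_intros)
  then show ?thesis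
    using pos by (simp add: field_simps)
qed

lemma berg2_main_ode:
  assumes "t \<in> {-1<..<1}"
  shows "(1 - t\<^sup>2) * deriv berg2_main t = - t * berg2_main t + (1 - t\<^sup>2)"
proof -
  have "1 - t\<^sup>2 > 0"
    using one_minus_sq_pos[OF assms] .
  then show ?thesis
    unfolding DERIV_imp_deriv[OF has_real_derivative_berg2_main[OF assms]] berg2_main_def
    by (simp add: field_simps flip: power2_eq_square)
qed

text \<open>Induction step for the m-th derivative of (1 - t^2) y' = - t y + (1 - t^2): the
  hypothesis exhibits y^(k+1) as N / (1 - t^2) with N differentiable, so the quotient rule gives
  both the differentiability of y^(k+1) and the next identity.\<close>

lemma iterated_ode_Suc:
  fixes f :: "real \<Rightarrow> real"
  assumes t: "t \<in> {-1<..<1}"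
    and deriv: "\<And>i x. i \<le> k \<Longrightarrow> x \<in> {-1<..<1} \<Longrightarrow>
      ((deriv ^^ i) f has_real_derivative (deriv ^^ Suc i) f x) (at x)"
    and ode: "\<And>x. x \<in> {-1<..<1} \<Longrightarrow> (1 - x\<^sup>2) * (deriv ^^ Suc k) f x =
      (2 * real k - 1) * x * (deriv ^^ k) f x + (real k ^ 2 - 2 * real k) * (deriv ^^ (k - 1)) f x
      + (deriv ^^ k) (\<lambda>x. 1 - x\<^sup>2) x"
  shows "((deriv ^^ Suc k) f has_real_derivative (deriv ^^ Suc (Suc k)) f t) (at t)"
    and "(1 - t\<^sup>2) * (deriv ^^ Suc (Suc k)) f t =
      (2 * real k + 1) * t * (deriv ^^ Suc k) f t + (real k ^ 2 - 1) * (deriv ^^ k) f t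
      + (deriv ^^ Suc k) (\<lambda>x. 1 - x\<^sup>2) t"
proof -
  let ?y = "\<lambda>i. (deriv ^^ i) f"
  let ?R = "\<lambda>i. (deriv ^^ i) (\<lambda>x. 1 - x\<^sup>2 :: real)"
  have R: "(?R i has_real_derivative ?R (Suc i) x) (at x)" for i x
    using infinitely_differentiable_on_one_minus_sq unfolding infinitely_differentiable_on_def by blast
  have coeff: "(real k ^ 2 - 2 * real k) * ?y (Suc (k - 1)) t = (real k ^ 2 - 2 * real k) * ?y k t"
    by (cases k) auto
  define N where "N x = (2 * real k - 1) * x * ?y k x + (real k ^ 2 - 2 * real k) * ?y (k - 1) x + ?R k x"
    for x
  define N' where "N' = (2 * real k - 1) * ?y k t + (2 * real k - 1) * t * ?y (Suc k) t
      + (real k ^ 2 - 2 * real k) * ?y k t + ?R (Suc k) t"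
  have y: "(?y k has_real_derivative ?y (Suc k) t) (at t)"
    "(?y (k - 1) has_real_derivative ?y (Suc (k - 1)) t) (at t)"
    using deriv[OF _ t] by simp_all
  have "(N has_real_derivative N') (at t)"
    unfolding N_def[abs_def] N'_def coeff[symmetric]
    by (rule derivative_eq_intros y R refl)+ simp
  then have "(?y (Suc k) has_real_derivative (N' - (- 2 * t) * ?y (Suc k) t) / (1 - t\<^sup>2)) (at t)"
    by (intro has_real_derivative_from_product_eq[where S = "{-1<..<1}" and q = "\<lambda>x. 1 - x\<^sup>2"])
       (use t ode in \<open>auto simp: N_def power2_eq_1_iff intro!: derivative_eq_intros\<close>)
  moreover from this have "(1 - t\<^sup>2) * ?y (Suc (Suc k)) t = N' + 2 * t * ?y (Suc k) t"
    using one_minus_sq_pos[OF t] by (simp add: DERIV_imp_deriv)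
  ultimately show "(?y (Suc k) has_real_derivative ?y (Suc (Suc k)) t) (at t)"
    and "(1 - t\<^sup>2) * ?y (Suc (Suc k)) t =
      (2 * real k + 1) * t * ?y (Suc k) t + (real k ^ 2 - 1) * ?y k t + ?R (Suc k) t"
    unfolding N'_def by (auto simp: DERIV_imp_deriv algebra_simps power2_eq_square)
qed

lemma berg2_main_iterated_ode:
  assumes "t \<in> {-1<..<1}"
  shows "((deriv ^^ m) berg2_main has_real_derivative (deriv ^^ Suc m) berg2_main t) (at t)"
    and "(1 - t\<^sup>2) * (deriv ^^ Suc m) berg2_main t =
      (2 * real m - 1) * t * (deriv ^^ m) berg2_main t
      + (real m ^ 2 - 2 * real m) * (deriv ^^ (m - 1)) berg2_main t
      + (deriv ^^ m) (\<lambda>x. 1 - x\<^sup>2) t"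
proof -
  have "\<forall>t\<in>{-1<..<1}. ((deriv ^^ m) berg2_main has_real_derivative (deriv ^^ Suc m) berg2_main t) (at t)
      \<and> (1 - t\<^sup>2) * (deriv ^^ Suc m) berg2_main t =
        (2 * real m - 1) * t * (deriv ^^ m) berg2_main t
        + (real m ^ 2 - 2 * real m) * (deriv ^^ (m - 1)) berg2_main t
        + (deriv ^^ m) (\<lambda>x. 1 - x\<^sup>2) t"
  proof (induction m rule: less_induct)
    case (less m)
    show ?case
    proof (cases m)
      case 0
      then show ?thesis
        using has_real_derivative_berg2_main berg2_main_ode
        by (simp add: DERIV_imp_deriv[OF has_real_derivative_berg2_main])
    next
      case (Suc k)
      then have "i \<le> k \<Longrightarrow> x \<in> {-1<..<1} \<Longrightarrow>
          ((deriv ^^ i) berg2_main has_real_derivative (deriv ^^ Suc i) berg2_main x) (at x)" for i x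
        using less.IH[of i] by auto
      with less.IH[of k] Suc show ?thesis
        using iterated_ode_Suc[where f = berg2_main and k = k] by (simp add: algebra_simps power2_eq_square)
    qed
  qed
  then show "((deriv ^^ m) berg2_main has_real_derivative (deriv ^^ Suc m) berg2_main t) (at t)"
    and "(1 - t\<^sup>2) * (deriv ^^ Suc m) berg2_main t =
      (2 * real m - 1) * t * (deriv ^^ m) berg2_main t
      + (real m ^ 2 - 2 * real m) * (deriv ^^ (m - 1)) berg2_main t
      + (deriv ^^ m) (\<lambda>x. 1 - x\<^sup>2) t"
    using assms by auto
qed

lemma infinitely_differentiable_on_berg2_main: "infinitely_differentiable_on {-1<..<1} berg2_main"
  unfolding infinitely_differentiable_on_def using berg2_main_iterated_ode(1) by blast

lemma infinitely_differentiable_on_berg: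
  assumes "j \<ge> 2"
  shows "infinitely_differentiable_on {-1<..<1} (berg j)"
proof -
  obtain k where "j = k + 2"
    using assms le_Suc_ex by (metis add.commute)
  moreover have "infinitely_differentiable_on {-1<..<1} (berg (k + 2))"
  proof (induction k rule: nat_induct2)
    case 0
    show ?case
      unfolding add_0 berg2_eq
      by (rule infinitely_differentiable_on_berg_step[OF _ infinitely_differentiable_on_berg2_main]) simp
  next
    case 1
    have "(1::nat) + 2 = 3"
      by simp
    then show ?case
      using infinitely_differentiable_on_berg3 by (simp only:)
  next
    case (step k)
    show ?case
      unfolding berg_add_two[OF le_add2]
      by (rule infinitely_differentiable_on_berg_step[OF _ step]) simp
  qed
  ultimately show ?thesis
    by simp
qed

section \<open>Scaled derivatives and their boundary constants\<close>

definition berg_scaled :: "nat \<Rightarrow> nat \<Rightarrow> real \<Rightarrow> real" where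
  "berg_scaled j m t = (1 - t\<^sup>2) powr ((real j - 3) / 2 + real m) * (deriv ^^ m) (berg j) t"

definition berg_limit :: "nat \<Rightarrow> nat \<Rightarrow> real" where
  "berg_limit j m = - (real j - 1) * 2 powr (real m - 2) * Gamma ((real j - 3) / 2 + real m)
      / pi powr ((real j - 1) / 2)"

lemma berg_scaled_add_two:
  assumes j: "j \<ge> 2" and t: "t \<in> {-1<..<1}"
  shows "berg_scaled (j + 2) m t =
      ((real j + 1) / (2 * pi) + (real j + 1) / (2 * pi * (real j - 1)) * real m)
        * ((1 - t\<^sup>2) * berg_scaled j m t)
      + (real j + 1) / (2 * pi * (real j - 1)) * t * berg_scaled j (Suc m) t
      + (real j + 1) / (2 * pi * omega j)
        * ((1 - t\<^sup>2) powr ((real j - 3) / 2 + real m + 1) * (deriv ^^ m) (\<lambda>x. x) t)"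
proof -
  define q where "q = 1 - t\<^sup>2"
  define e where "e = (real j - 3) / 2 + real m"
  have "q powr (e + 1) = q * q powr e"
    using one_minus_sq_pos[OF t] by (simp add: q_def powr_real_plus_1)
  moreover have "(real (j + 2) - 3) / 2 + real m = e + 1" "(real j - 3) / 2 + real (Suc m) = e + 1"
    by (simp_all add: e_def field_simps)
  ultimately show ?thesis
    unfolding berg_scaled_def berg_add_two[OF j]
      iterated_deriv_berg_step[OF _ infinitely_differentiable_on_berg[OF j] t, simplified]
      q_def[symmetric] e_def[symmetric]
    by (simp add: algebra_simps)
qed

lemma berg_scaled_3:
  assumes "t \<in> {-1<..<1}"
  shows "berg_scaled 3 m t = (1 - t\<^sup>2) ^ m * berg3_deriv m t"
  using one_minus_sq_pos[OF assms]
  by (simp add: berg_scaled_def iterated_deriv_berg3[OF assms] powr_realpow)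

lemma berg_scaled_3_Suc_Suc:
  assumes "t \<in> {-1<..<1}"
  shows "berg_scaled 3 (Suc (Suc k)) t =
    - ((1 + t) ^ Suc (Suc k) * (fact k * (1 - t) + fact (Suc k))) / (2 * pi)"
proof -
  define u v where "u = 1 - t" and "v = 1 + t"
  have "u \<noteq> 0"
    using assms by (simp add: u_def)
  have split: "1 - t\<^sup>2 = v * u"
    by (simp add: u_def v_def power2_eq_square algebra_simps)
  have "u ^ Suc (Suc k) = u ^ Suc k * u"
    by simp
  then have "(v * u) ^ Suc (Suc k) * (- (fact k / u ^ Suc k + fact (Suc k) / u ^ Suc (Suc k)) / (2 * pi))
      = - (v ^ Suc (Suc k) * (fact k * u + fact (Suc k))) / (2 * pi)"
    using \<open>u \<noteq> 0\<close> by (simp only: power_mult_distrib) (simp add: field_simps del: power_Suc)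
  then show ?thesis
    unfolding berg_scaled_3[OF assms] berg3_deriv.simps split u_def[symmetric] v_def[symmetric] .
qed

definition berg2_main_scaled :: "nat \<Rightarrow> real \<Rightarrow> real" where
  "berg2_main_scaled m t = (1 - t\<^sup>2) powr (real m - 1 / 2) * (deriv ^^ m) berg2_main t"

lemma berg_scaled_2:
  assumes "t \<in> {-1<..<1}"
  shows "berg_scaled 2 m t = berg2_main_scaled m t / (2 * pi)
      - (1 - t\<^sup>2) powr (real m - 1 / 2) * (deriv ^^ m) (\<lambda>x. x) t / (4 * pi)"
proof -
  have "(real 2 - 3) / 2 + real m = real m - 1 / 2"
    by simp
  then show ?thesis
    unfolding berg_scaled_def berg2_main_scaled_def berg2_eq
      iterated_deriv_berg_step[OF _ infinitely_differentiable_on_berg2_main assms, simplified]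
    by (simp add: field_simps)
qed

lemma berg2_main_scaled_0_1:
  assumes "t \<in> {-1<..<1}"
  shows "berg2_main_scaled 0 t = pi - arccos t"
    and "berg2_main_scaled (Suc 0) t = sqrt (1 - t\<^sup>2) - t * (pi - arccos t)"
proof -
  have pos: "1 - t\<^sup>2 > 0"
    using one_minus_sq_pos[OF assms] .
  then have "(1 - t\<^sup>2) powr (- 1 / 2) * sqrt (1 - t\<^sup>2) = 1"
    by (simp add: powr_half_sqrt[symmetric] powr_add[symmetric])
  then show "berg2_main_scaled 0 t = pi - arccos t"
    by (simp add: berg2_main_scaled_def berg2_main_def algebra_simps)
  show "berg2_main_scaled (Suc 0) t = sqrt (1 - t\<^sup>2) - t * (pi - arccos t)"
    using pos
    by (simp add: berg2_main_scaled_def DERIV_imp_deriv[OF has_real_derivative_berg2_main[OF assms]]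
        powr_half_sqrt field_simps)
qed

lemma berg2_main_scaled_Suc_Suc:
  assumes t: "t \<in> {-1<..<1}"
  shows "berg2_main_scaled (Suc (Suc m)) t =
      (2 * real m + 1) * t * berg2_main_scaled (Suc m) t
      + (real m ^ 2 - 1) * ((1 - t\<^sup>2) * berg2_main_scaled m t)
      + (1 - t\<^sup>2) powr (real m + 1 / 2) * (deriv ^^ Suc m) (\<lambda>x. 1 - x\<^sup>2) t"
proof -
  define q where "q = 1 - t\<^sup>2"
  define P where "P = q powr (real m + 1 / 2)"
  have powr_plus_1: "q powr (x + 1) = q * q powr x" for x
    using one_minus_sq_pos[OF t] by (simp add: q_def powr_real_plus_1)
  have "berg2_main_scaled (Suc (Suc m)) t = P * (q * (deriv ^^ Suc (Suc m)) berg2_main t)"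
    unfolding berg2_main_scaled_def P_def q_def[symmetric]
    using powr_plus_1[of "real m + 1 / 2"] by (simp add: algebra_simps)
  moreover have "berg2_main_scaled (Suc m) t = P * (deriv ^^ Suc m) berg2_main t"
    unfolding berg2_main_scaled_def P_def q_def[symmetric]
    by (rule arg_cong[where f = "\<lambda>x. q powr x * _"]) simp
  moreover have "q * berg2_main_scaled m t = P * (deriv ^^ m) berg2_main t"
    unfolding berg2_main_scaled_def P_def q_def[symmetric]
    using powr_plus_1[of "real m - 1 / 2"] by (simp add: algebra_simps)
  ultimately show ?thesis
    using arg_cong[OF berg2_main_iterated_ode(2)[OF t, of "Suc m"], of "\<lambda>x. P * x"]
    unfolding q_def[symmetric] P_def[symmetric]
    by (simp add: algebra_simps power2_eq_square)
qed

lemma berg_limit_Suc: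
  assumes "(real j - 3) / 2 + real m \<notin> \<int>\<^sub>\<le>\<^sub>0"
  shows "berg_limit j (Suc m) = (real j - 3 + 2 * real m) * berg_limit j m"
proof -
  define x where "x = (real j - 3) / 2 + real m"
  have "(real j - 3) / 2 + real (Suc m) = x + 1" "real (Suc m) - 2 = real m - 2 + 1"
    by (simp_all add: x_def)
  moreover have "Gamma (x + 1) = x * Gamma x"
    using assms by (simp add: x_def Gamma_plus1)
  moreover have "2 powr (real m - 2 + 1) = 2 * 2 powr (real m - 2)"
    by (rule powr_real_plus_1) simp
  moreover have "real j - 3 + 2 * real m = 2 * x"
    by (simp add: x_def)
  ultimately show ?thesis
    unfolding berg_limit_def x_def[symmetric] by (simp only:) (simp add: field_simps)
qed

lemma real_minus_half_not_nonpos_Ints: "real m - 1 / 2 \<notin> \<int>\<^sub>\<le>\<^sub>0"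
proof
  assume "real m - 1 / 2 \<in> \<int>\<^sub>\<le>\<^sub>0"
  then obtain n where "real m - 1 / 2 = - real n"
    by (elim nonpos_Ints_cases')
  then have "real (2 * (m + n)) = real 1"
    by simp
  then have "2 * (m + n) = 1"
    by (simp only: of_nat_eq_iff)
  then show False
    by presburger
qed

lemma berg_limit_2_Suc: "berg_limit 2 (Suc m) = (2 * real m - 1) * berg_limit 2 m"
  using berg_limit_Suc[of 2 m] real_minus_half_not_nonpos_Ints[of m] by simp

lemma berg_limit_2_0: "berg_limit 2 0 = 1 / 2"
proof -
  have "Gamma (1 / 2 :: real) = - 1 / 2 * Gamma (- 1 / 2)"
    using Gamma_plus1[of "- 1 / 2 :: real"] real_minus_half_not_nonpos_Ints[of 0] by simp
  then have "Gamma (- 1 / 2 :: real) = - 2 * sqrt pi"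
    by (simp add: Gamma_one_half_real)
  then show ?thesis
    by (simp add: berg_limit_def powr_minus powr_half_sqrt)
qed

lemma berg_limit_3_Suc: "berg_limit 3 (Suc m) = - (2 ^ m * fact m) / pi"
  using Gamma_fact[of m, where 'a = real]
  by (simp add: berg_limit_def powr_realpow[symmetric] powr_diff field_simps)

lemma berg_limit_add_two:
  assumes "j \<ge> 2"
  shows "berg_limit (j + 2) m = (real j + 1) / (2 * pi * (real j - 1)) * berg_limit j (Suc m)"
proof -
  have "real (Suc m) - 2 = real m - 2 + 1" "(real (j + 2) - 1) / 2 = (real j - 1) / 2 + 1"
    "(real (j + 2) - 3) / 2 + real m = (real j - 3) / 2 + real (Suc m)" "real (j + 2) - 1 = real j + 1"
    by (simp_all add: field_simps)
  moreover have "2 powr (real m - 2 + 1) = 2 * 2 powr (real m - 2)"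
    and "pi powr ((real j - 1) / 2 + 1) = pi * pi powr ((real j - 1) / 2)"
    by (rule powr_real_plus_1, simp)+
  ultimately show ?thesis
    using assms unfolding berg_limit_def by (simp only:) (simp add: field_simps)
qed

section \<open>Limits at the endpoints\<close>

text \<open>Both endpoints are treated at once: at s = -1 or s = 1 the expected limit is
  (1 + s) / 2 times the constant, and s * (1 + s) = 1 + s.\<close>

locale interval_endpoint =
  fixes s :: real
  assumes endpoint: "s = -1 \<or> s = 1"
begin

lemma tendsto_at_endpointI:
  assumes "(f \<longlongrightarrow> L (-1)) (at_right (-1))" and "(f \<longlongrightarrow> L 1) (at_left 1)"
  shows "(f \<longlongrightarrow> L s) (at s within {-1<..<1})"
  using endpoint assms by (auto simp: at_within_Ioo_endpoints)

lemma tendsto_one_minus_sq: "((\<lambda>t. 1 - t\<^sup>2) \<longlongrightarrow> 0) (at s within {-1<..<1})"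
proof -
  have "((\<lambda>t. 1 - t\<^sup>2) \<longlongrightarrow> 1 - s\<^sup>2) (at s within {-1<..<1})"
    by (intro tendsto_intros)
  then show ?thesis
    using endpoint by auto
qed

lemma tendsto_one_minus_sq_powr:
  assumes "a > 0"
  shows "((\<lambda>t. (1 - t\<^sup>2) powr a) \<longlongrightarrow> 0) (at s within {-1<..<1})"
proof (rule tendsto_zero_powrI[OF tendsto_one_minus_sq tendsto_const _ assms])
  have "\<forall>\<^sub>F t in at s within {-1<..<1}. t \<in> {-1<..<1}"
    by (simp add: eventually_at_filter)
  then show "\<forall>\<^sub>F t in at s within {-1<..<1}. 0 \<le> 1 - t\<^sup>2"
    by (rule eventually_mono) (use one_minus_sq_pos in fastforce)
qed

lemma tendsto_one_minus_sq_mult: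
  assumes "(f \<longlongrightarrow> L) (at s within {-1<..<1})"
  shows "((\<lambda>t. (1 - t\<^sup>2) * f t) \<longlongrightarrow> 0) (at s within {-1<..<1})"
  using tendsto_mult[OF tendsto_one_minus_sq assms] by simp

lemma tendsto_iterated_deriv:
  assumes "infinitely_differentiable_on UNIV f"
  shows "((deriv ^^ m) f \<longlongrightarrow> (deriv ^^ m) f s) (at s within {-1<..<1})"
  using isCont_iterated_deriv[OF assms UNIV_I]
  by (simp add: continuous_at_imp_continuous_at_within continuous_within[symmetric])

lemma tendsto_pi_minus_arccos: "((\<lambda>t. pi - arccos t) \<longlongrightarrow> (1 + s) * pi / 2) (at s within {-1<..<1})"
proof -
  have "((\<lambda>t. arccos t) \<longlongrightarrow> arccos s) (at s within {-1<..<1})"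
    using endpoint
    by (intro continuous_on_tendsto_compose[OF continuous_on_arccos' tendsto_ident_at])
       (auto simp: eventually_at_filter)
  moreover have "pi - arccos s = (1 + s) * pi / 2"
    using endpoint by auto
  ultimately show ?thesis
    by (metis tendsto_diff[OF tendsto_const])
qed

lemma tendsto_berg2_main_scaled:
  "(berg2_main_scaled m \<longlongrightarrow> (1 + s) * pi * berg_limit 2 m) (at s within {-1<..<1})"
proof -
  have "(berg2_main_scaled m \<longlongrightarrow> (1 + s) * pi * berg_limit 2 m) (at s within {-1<..<1}) \<and>
      (berg2_main_scaled (Suc m) \<longlongrightarrow> (1 + s) * pi * berg_limit 2 (Suc m)) (at s within {-1<..<1})"
  proof (induction m)
    case 0
    have "((\<lambda>t. pi - arccos t) \<longlongrightarrow> (1 + s) * pi * berg_limit 2 0) (at s within {-1<..<1})"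
      using tendsto_pi_minus_arccos by (simp add: berg_limit_2_0)
    moreover have "((\<lambda>t. sqrt (1 - t\<^sup>2) - t * (pi - arccos t))
        \<longlongrightarrow> sqrt (1 - s\<^sup>2) - s * ((1 + s) * pi / 2)) (at s within {-1<..<1})"
      by (intro tendsto_intros tendsto_pi_minus_arccos)
    then have "((\<lambda>t. sqrt (1 - t\<^sup>2) - t * (pi - arccos t))
        \<longlongrightarrow> (1 + s) * pi * berg_limit 2 (Suc 0)) (at s within {-1<..<1})"
      by (rule tendsto_eq_rhs) (use endpoint in \<open>auto simp: berg_limit_2_Suc berg_limit_2_0\<close>)
    ultimately show ?case
      by (auto elim!: Lim_transform_within[OF _ zero_less_one] simp: berg2_main_scaled_0_1)
  next
    case (Suc m)
    have "((\<lambda>t. (2 * real m + 1) * t * berg2_main_scaled (Suc m) t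
        + (real m ^ 2 - 1) * ((1 - t\<^sup>2) * berg2_main_scaled m t)
        + (1 - t\<^sup>2) powr (real m + 1 / 2) * (deriv ^^ Suc m) (\<lambda>x. 1 - x\<^sup>2) t)
        \<longlongrightarrow> (2 * real m + 1) * s * ((1 + s) * pi * berg_limit 2 (Suc m))
          + (real m ^ 2 - 1) * 0 + 0 * (deriv ^^ Suc m) (\<lambda>x. 1 - x\<^sup>2) s) (at s within {-1<..<1})"
      using Suc.IH
      by (intro tendsto_intros tendsto_one_minus_sq_mult tendsto_one_minus_sq_powr
          tendsto_iterated_deriv infinitely_differentiable_on_one_minus_sq) auto
    then have "((\<lambda>t. (2 * real m + 1) * t * berg2_main_scaled (Suc m) t
        + (real m ^ 2 - 1) * ((1 - t\<^sup>2) * berg2_main_scaled m t)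
        + (1 - t\<^sup>2) powr (real m + 1 / 2) * (deriv ^^ Suc m) (\<lambda>x. 1 - x\<^sup>2) t)
        \<longlongrightarrow> (1 + s) * pi * berg_limit 2 (Suc (Suc m))) (at s within {-1<..<1})"
      by (rule tendsto_eq_rhs) (use endpoint in \<open>auto simp: berg_limit_2_Suc[of "Suc m"] algebra_simps\<close>)
    then show ?case
      using Suc.IH
      by (auto elim!: Lim_transform_within[OF _ zero_less_one] simp: berg2_main_scaled_Suc_Suc)
  qed
  then show ?thesis ..
qed

lemma tendsto_berg_scaled_2:
  assumes "m \<noteq> 0"
  shows "(berg_scaled 2 m \<longlongrightarrow> (1 + s) / 2 * berg_limit 2 m) (at s within {-1<..<1})"
proof -
  have "((\<lambda>t. berg2_main_scaled m t / (2 * pi)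
      - (1 - t\<^sup>2) powr (real m - 1 / 2) * (deriv ^^ m) (\<lambda>x. x) t / (4 * pi))
      \<longlongrightarrow> (1 + s) * pi * berg_limit 2 m / (2 * pi) - 0 * (deriv ^^ m) (\<lambda>x. x) s / (4 * pi))
      (at s within {-1<..<1})"
    using assms
    by (intro tendsto_intros tendsto_berg2_main_scaled tendsto_one_minus_sq_powr
        tendsto_iterated_deriv infinitely_differentiable_on_ident) (cases m, simp_all)
  then have "((\<lambda>t. berg2_main_scaled m t / (2 * pi)
      - (1 - t\<^sup>2) powr (real m - 1 / 2) * (deriv ^^ m) (\<lambda>x. x) t / (4 * pi))
      \<longlongrightarrow> (1 + s) / 2 * berg_limit 2 m) (at s within {-1<..<1})"
    by (rule tendsto_eq_rhs) simp
  then show ?thesis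
    by (rule Lim_transform_within[OF _ zero_less_one]) (simp add: berg_scaled_2)
qed

lemma tendsto_berg_scaled_2_weighted:
  "((\<lambda>t. (1 - t\<^sup>2) * berg_scaled 2 m t) \<longlongrightarrow> 0) (at s within {-1<..<1})"
proof (cases "m = 0")
  case False
  then show ?thesis
    by (rule tendsto_one_minus_sq_mult[OF tendsto_berg_scaled_2])
next
  case True
  have "((\<lambda>t. (1 - t\<^sup>2) * berg2_main_scaled 0 t / (2 * pi) - (1 - t\<^sup>2) powr (1 / 2) * t / (4 * pi))
      \<longlongrightarrow> 0 / (2 * pi) - 0 * s / (4 * pi)) (at s within {-1<..<1})"
    by (intro tendsto_intros tendsto_one_minus_sq_mult[OF tendsto_berg2_main_scaled]
        tendsto_one_minus_sq_powr) simp_all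
  moreover have "(1 - t\<^sup>2) * berg_scaled 2 0 t
      = (1 - t\<^sup>2) * berg2_main_scaled 0 t / (2 * pi) - (1 - t\<^sup>2) powr (1 / 2) * t / (4 * pi)"
    if "t \<in> {-1<..<1}" for t
    using powr_real_plus_1[OF one_minus_sq_pos[OF that], of "- (1 / 2)"]
    by (simp add: berg_scaled_2[OF that] right_diff_distrib)
  ultimately show ?thesis
    by (auto elim!: Lim_transform_within[OF _ zero_less_one] simp: True)
qed

lemma tendsto_berg_scaled_3:
  assumes "m \<noteq> 0"
  shows "(berg_scaled 3 m \<longlongrightarrow> (1 + s) / 2 * berg_limit 3 m) (at s within {-1<..<1})"
proof -
  consider "m = 1" | k where "m = Suc (Suc k)"
    using assms by (metis One_nat_def not0_implies_Suc)
  then show ?thesis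
  proof cases
    case 1
    have "((\<lambda>t. (1 - t\<^sup>2) * berg3_deriv 1 t) \<longlongrightarrow> (1 + s) / 2 * (- 1 / pi)) (at s within {-1<..<1})"
      by (rule tendsto_at_endpointI[where L = "\<lambda>s. (1 + s) / 2 * (- 1 / pi)"])
         (simp_all, (real_asymp simp: inverse_eq_divide)+)
    then show ?thesis
      unfolding 1 using berg_limit_3_Suc[of 0]
      by (auto elim!: Lim_transform_within[OF _ zero_less_one] simp: berg_scaled_3 inverse_eq_divide)
  next
    case 2
    have "((\<lambda>t. - ((1 + t) ^ Suc (Suc k) * (fact k * (1 - t) + fact (Suc k))) / (2 * pi))
        \<longlongrightarrow> - ((1 + s) ^ Suc (Suc k) * (fact k * (1 - s) + fact (Suc k))) / (2 * pi))
        (at s within {-1<..<1})"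
      by (intro tendsto_intros) simp
    then have "((\<lambda>t. - ((1 + t) ^ Suc (Suc k) * (fact k * (1 - t) + fact (Suc k))) / (2 * pi))
        \<longlongrightarrow> (1 + s) / 2 * berg_limit 3 m) (at s within {-1<..<1})"
      by (rule tendsto_eq_rhs) (use endpoint in \<open>auto simp: 2 berg_limit_3_Suc\<close>)
    then show ?thesis
      by (rule Lim_transform_within[OF _ zero_less_one]) (simp add: 2 berg_scaled_3_Suc_Suc)
  qed
qed

lemma tendsto_berg_scaled_3_weighted:
  "((\<lambda>t. (1 - t\<^sup>2) * berg_scaled 3 m t) \<longlongrightarrow> 0) (at s within {-1<..<1})"
proof (cases "m = 0")
  case False
  then show ?thesis
    by (rule tendsto_one_minus_sq_mult[OF tendsto_berg_scaled_3])
next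
  case True
  have "((\<lambda>t. (1 - t\<^sup>2) * berg3_deriv 0 t) \<longlongrightarrow> 0) (at s within {-1<..<1})"
    by (rule tendsto_at_endpointI[where L = "\<lambda>_. 0"]) (simp_all, real_asymp+)
  then show ?thesis
    by (rule Lim_transform_within[OF _ zero_less_one]) (simp add: True berg_scaled_3)
qed

lemma tendsto_berg_scaled_add_two:
  assumes j: "j \<ge> 2"
    and weighted: "((\<lambda>t. (1 - t\<^sup>2) * berg_scaled j m t) \<longlongrightarrow> 0) (at s within {-1<..<1})"
    and next_deriv: "(berg_scaled j (Suc m) \<longlongrightarrow> (1 + s) / 2 * berg_limit j (Suc m)) (at s within {-1<..<1})"
  shows "(berg_scaled (j + 2) m \<longlongrightarrow> (1 + s) / 2 * berg_limit (j + 2) m) (at s within {-1<..<1})"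
proof -
  define a b c where "a = (real j + 1) / (2 * pi) + (real j + 1) / (2 * pi * (real j - 1)) * real m"
    and "b = (real j + 1) / (2 * pi * (real j - 1))" and "c = (real j + 1) / (2 * pi * omega j)"
  have "(real j - 3) / 2 + real m + 1 > 0"
    using j by (simp add: field_simps)
  then have "((\<lambda>t. a * ((1 - t\<^sup>2) * berg_scaled j m t) + b * t * berg_scaled j (Suc m) t
      + c * ((1 - t\<^sup>2) powr ((real j - 3) / 2 + real m + 1) * (deriv ^^ m) (\<lambda>x. x) t))
      \<longlongrightarrow> a * 0 + b * s * ((1 + s) / 2 * berg_limit j (Suc m)) + c * (0 * (deriv ^^ m) (\<lambda>x. x) s))
      (at s within {-1<..<1})"
    by (intro tendsto_intros weighted next_deriv tendsto_one_minus_sq_powr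
        tendsto_iterated_deriv infinitely_differentiable_on_ident)
  then have "((\<lambda>t. a * ((1 - t\<^sup>2) * berg_scaled j m t) + b * t * berg_scaled j (Suc m) t
      + c * ((1 - t\<^sup>2) powr ((real j - 3) / 2 + real m + 1) * (deriv ^^ m) (\<lambda>x. x) t))
      \<longlongrightarrow> (1 + s) / 2 * (b * berg_limit j (Suc m))) (at s within {-1<..<1})"
    by (rule tendsto_eq_rhs) (use endpoint in auto)
  then show ?thesis
    unfolding berg_limit_add_two[OF j] b_def[symmetric]
    by (rule Lim_transform_within[OF _ zero_less_one]) (simp only: berg_scaled_add_two[OF j] a_def b_def c_def)
qed

lemma tendsto_berg_scaled:
  assumes "j \<ge> 2"
  shows "((\<lambda>t. (1 - t\<^sup>2) * berg_scaled j m t) \<longlongrightarrow> 0) (at s within {-1<..<1})"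
    and "(j, m) \<notin> {(2, 0), (3, 0)} \<Longrightarrow>
      (berg_scaled j m \<longlongrightarrow> (1 + s) / 2 * berg_limit j m) (at s within {-1<..<1})"
proof -
  obtain k where "j = k + 2"
    using assms le_Suc_ex by (metis add.commute)
  moreover have "\<forall>m. ((\<lambda>t. (1 - t\<^sup>2) * berg_scaled (k + 2) m t) \<longlongrightarrow> 0) (at s within {-1<..<1}) \<and>
      ((k + 2, m) \<notin> {(2, 0), (3, 0)} \<longrightarrow>
        (berg_scaled (k + 2) m \<longlongrightarrow> (1 + s) / 2 * berg_limit (k + 2) m) (at s within {-1<..<1}))"
  proof (induction k rule: nat_induct2)
    case 0
    show ?case
      using tendsto_berg_scaled_2_weighted tendsto_berg_scaled_2 by (simp add: numeral_2_eq_2)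
  next
    case 1
    show ?case
      using tendsto_berg_scaled_3_weighted tendsto_berg_scaled_3 by (simp add: numeral_3_eq_3)
  next
    case (step k)
    have "(berg_scaled (k + 2 + 2) m \<longlongrightarrow> (1 + s) / 2 * berg_limit (k + 2 + 2) m) (at s within {-1<..<1})"
      for m
      by (rule tendsto_berg_scaled_add_two[of "k + 2"]) (use step in auto)
    then show ?case
      using tendsto_one_minus_sq_mult by blast
  qed
  ultimately show "((\<lambda>t. (1 - t\<^sup>2) * berg_scaled j m t) \<longlongrightarrow> 0) (at s within {-1<..<1})"
    and "(j, m) \<notin> {(2, 0), (3, 0)} \<Longrightarrow>
      (berg_scaled j m \<longlongrightarrow> (1 + s) / 2 * berg_limit j m) (at s within {-1<..<1})"
    by auto
qed

end

theorem lemma4p3: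
  fixes j m :: nat
  assumes "j \<ge> 2" and "(j, m) \<notin> {(2, 0), (3, 0)}"
  shows "((\<lambda>t. (1 - t\<^sup>2) powr ((real j - 3) / 2 + real m) * (deriv ^^ m) (berg j) t)
            \<longlongrightarrow> 0) (at_right (-1)) \<and>
         ((\<lambda>t. (1 - t\<^sup>2) powr ((real j - 3) / 2 + real m) * (deriv ^^ m) (berg j) t)
            \<longlongrightarrow> - (real j - 1) * 2 powr (real m - 2)
                 * Gamma ((real j - 3) / 2 + real m) / pi powr ((real j - 1) / 2)) (at_left 1)"
proof -
  interpret left: interval_endpoint "-1"
    by unfold_locales simp
  interpret right: interval_endpoint 1
    by unfold_locales simp
  have "(berg_scaled j m \<longlongrightarrow> 0) (at_right (-1))"
    using left.tendsto_berg_scaled(2)[OF assms] by (simp add: at_within_Ioo_endpoints)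
  moreover have "(berg_scaled j m \<longlongrightarrow> berg_limit j m) (at_left 1)"
    using right.tendsto_berg_scaled(2)[OF assms] by (simp add: at_within_Ioo_endpoints)
  ultimately show ?thesis
    unfolding berg_scaled_def[abs_def] berg_limit_def by simp
qed

end
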